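(* Let $R$ be a commutative ring endowed with a translation-invariant partial order $\le$ on its additive group, and assume that $R$ is archimedean and localizable. Then $n\cdot 1\in\mathrm{Loc}(R)$ for every $n\in\mathbb{N}$.
   Context: Rings are commutative with unit $1$; $\mathbb{N}=\{1,2,\dots\}$. Translation-invariant means $r\le s$ implies $r+t\le s+t$; $R^+=\{r:0\le r\}$. $R$ is archimedean if whenever $g,h\in R$ satisfy $kg+h\in R^+$ for all $k\in\mathbb{N}$, then $g\in R^+$. $\mathrm{Loc}(R)$ is the set of $s\in 1+R^+$ such that for all $r\in R$, $rs\in R^+$ implies $r\in R^+$. $R$ is localizable if for every $r\in R$ there exists $s\in\mathrm{Loc}(R)$ with $-s\le r\le s$. *)

theory Defs
  imports Main
begin

definition transl_inv_porder :: "('a::comm_ring_1 \<Rightarrow> 'a \<Rightarrow> bool) \<Rightarrow> bool" where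
  "transl_inv_porder le \<longleftrightarrow>
     (\<forall>r. le r r) \<and>
     (\<forall>r s. le r s \<and> le s r \<longrightarrow> r = s) \<and>
     (\<forall>r s t. le r s \<and> le s t \<longrightarrow> le r t) \<and>
     (\<forall>r s t. le r s \<longrightarrow> le (r + t) (s + t))"

definition pos_cone :: "('a::comm_ring_1 \<Rightarrow> 'a \<Rightarrow> bool) \<Rightarrow> 'a set" where
  "pos_cone le = {r. le 0 r}"

definition archimedean_ord :: "('a::comm_ring_1 \<Rightarrow> 'a \<Rightarrow> bool) \<Rightarrow> bool" where
  "archimedean_ord le \<longleftrightarrow>
     (\<forall>g h. (\<forall>k::nat. k \<ge> 1 \<longrightarrow> of_nat k * g + h \<in> pos_cone le) \<longrightarrow> g \<in> pos_cone le)"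

definition Loc :: "('a::comm_ring_1 \<Rightarrow> 'a \<Rightarrow> bool) \<Rightarrow> 'a set" where
  "Loc le = {s. s \<in> (\<lambda>r. 1 + r) ` pos_cone le \<and>
                (\<forall>r. r * s \<in> pos_cone le \<longrightarrow> r \<in> pos_cone le)}"

definition localizable :: "('a::comm_ring_1 \<Rightarrow> 'a \<Rightarrow> bool) \<Rightarrow> bool" where
  "localizable le \<longleftrightarrow> (\<forall>r. \<exists>s \<in> Loc le. le (- s) r \<and> le r s)"

end

theory Submission
  imports Defs
begin

text \<open>Localizability at 0 makes some element of Loc R nonnegative, so
  cancelling it shows 1 \<ge> 0; hence n = 1 + (n - 1) \<ge> 1. For the cancellation
  property, let n r \<ge> 0 and choose s \<in> Loc R with -s \<le> r. Writing
  k = q n + j with 0 \<le> j < n, each k r + n s = q (n r) + j (r + s) + (n - j) s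
  is a sum of nonnegative elements, so r \<ge> 0 by the archimedean property.\<close>

lemma transl_inv_porderD:
  assumes "transl_inv_porder le"
  shows "le r r"
    and "le r s \<Longrightarrow> le s t \<Longrightarrow> le r t"
    and "le r s \<Longrightarrow> le (r + t) (s + t)"
  using assms unfolding transl_inv_porder_def by blast+

lemma pos_cone_add:
  assumes "transl_inv_porder le" "a \<in> pos_cone le" "b \<in> pos_cone le"
  shows "a + b \<in> pos_cone le"
proof -
  have "le b (a + b)"
    using transl_inv_porderD(3)[OF assms(1), of 0 a b] assms(2) unfolding pos_cone_def by simp
  then show ?thesis
    using transl_inv_porderD(2)[OF assms(1)] assms(3) unfolding pos_cone_def by blast
qed

lemma pos_cone_of_nat_mult:
  assumes "transl_inv_porder le" "a \<in> pos_cone le"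
  shows "of_nat m * a \<in> pos_cone le"
proof (induction m)
  case 0
  then show ?case
    using transl_inv_porderD(1)[OF assms(1)] unfolding pos_cone_def by simp
next
  case (Suc m)
  have "of_nat (Suc m) * a = a + of_nat m * a"
    by (simp add: algebra_simps)
  then show ?case
    using pos_cone_add[OF assms Suc] by simp
qed

lemma le_imp_diff_in_pos_cone:
  assumes "transl_inv_porder le" "le x y"
  shows "y - x \<in> pos_cone le"
proof -
  have "le (x + - x) (y + - x)"
    using transl_inv_porderD(3)[OF assms] .
  then show ?thesis
    unfolding pos_cone_def by simp
qed

lemma one_in_pos_cone_if_localizable:
  assumes "localizable le"
  shows "1 \<in> pos_cone le"
proof -
  obtain s where s: "s \<in> Loc le" "le 0 s"
    using assms unfolding localizable_def by blast
  then have "1 * s \<in> pos_cone le"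
    unfolding pos_cone_def by simp
  then show ?thesis
    using s(1) unfolding Loc_def by blast
qed

lemma Loc_subset_pos_cone:
  assumes "transl_inv_porder le" "1 \<in> pos_cone le"
  shows "Loc le \<subseteq> pos_cone le"
  using pos_cone_add[OF assms] unfolding Loc_def by blast

lemma of_nat_in_shifted_pos_cone:
  assumes "transl_inv_porder le" "1 \<in> pos_cone le" "n \<ge> 1"
  shows "of_nat n \<in> (\<lambda>r. 1 + r) ` pos_cone le"
proof
  show "of_nat n = 1 + of_nat (n - 1) * 1"
    using assms(3) by (cases n) simp_all
  show "of_nat (n - 1) * 1 \<in> pos_cone le"
    using pos_cone_of_nat_mult[OF assms(1,2)] .
qed

lemma archimedean_pos_cone_cancel_of_nat:
  assumes "transl_inv_porder le" "archimedean_ord le" "n \<ge> 1"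
    and nr: "of_nat n * r \<in> pos_cone le"
    and s: "s \<in> pos_cone le" and rs: "r + s \<in> pos_cone le"
  shows "r \<in> pos_cone le"
proof -
  have "of_nat k * r + of_nat n * s \<in> pos_cone le" for k
  proof -
    define q j where "q = k div n" and "j = k mod n"
    have "j \<le> n"
      using assms(3) unfolding j_def by (simp add: less_imp_le)
    then have "(of_nat n :: 'a) = of_nat j + of_nat (n - j)"
      by (simp add: of_nat_diff)
    moreover have "k = q * n + j"
      unfolding q_def j_def by simp
    then have "(of_nat k :: 'a) = of_nat q * of_nat n + of_nat j"
      by simp
    ultimately have decomposition: "of_nat k * r + of_nat n * s =
        of_nat q * (of_nat n * r) + (of_nat j * (r + s) + of_nat (n - j) * s)"
      by (simp add: algebra_simps)
    show ?thesis
      unfolding decomposition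
      by (intro pos_cone_add[OF assms(1)] pos_cone_of_nat_mult[OF assms(1)] nr rs s)
  qed
  then show ?thesis
    using assms(2) unfolding archimedean_ord_def by blast
qed

theorem lemma3:
  fixes le :: "'a::comm_ring_1 \<Rightarrow> 'a \<Rightarrow> bool"
  assumes "transl_inv_porder le"
    and "archimedean_ord le"
    and "localizable le"
    and "n \<ge> (1::nat)"
  shows "(of_nat n :: 'a) \<in> Loc le"
proof -
  have one: "1 \<in> pos_cone le"
    using one_in_pos_cone_if_localizable[OF assms(3)] .
  have "r \<in> pos_cone le" if "r * of_nat n \<in> pos_cone le" for r
  proof -
    obtain s where s: "s \<in> Loc le" "le (- s) r"
      using assms(3) unfolding localizable_def by blast
    have "r - - s \<in> pos_cone le"
      using le_imp_diff_in_pos_cone[OF assms(1) s(2)] .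
    moreover have "s \<in> pos_cone le"
      using Loc_subset_pos_cone[OF assms(1) one] s(1) by blast
    ultimately show ?thesis
      using archimedean_pos_cone_cancel_of_nat[OF assms(1,2,4)] that by (simp add: mult.commute)
  qed
  then show ?thesis
    using of_nat_in_shifted_pos_cone[OF assms(1) one assms(4)] unfolding Loc_def by blast
qed

end
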